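(* Let $(X,<)$ be a linearly ordered set and $u,v\in\beta X$. Then $$\widetilde{\min}(u,v)=u\iff\widetilde{\max}(u,v)=v\iff \mathrm{supp}(u)<\mathrm{supp}(v)\ \vee\ \mathrm{supp}(u)=\mathrm{supp}(v)=I_u=I_v\ \vee\ u=v,$$ $$\widetilde{\min}(u,v)=v\iff\widetilde{\max}(u,v)=u\iff \mathrm{supp}(v)<\mathrm{supp}(u)\ \vee\ \mathrm{supp}(u)=\mathrm{supp}(v)=J_u=J_v\ \vee\ u=v.$$
   Context: $\beta X$ is the set of ultrafilters over $X$; $\tilde x=\{S\subseteq X:x\in S\}$. For a binary operation $F$ on $X$ (here $\min,\max$), $S\in\tilde F(u,v)\iff\{x\in X:\{y\in X:F(x,y)\in S\}\in v\}\in u$ for all $S\subseteq X$. $I_u=\bigcap\{I\in u: I\text{ initial segment of }X\}$, $J_u=\bigcap\{J\in u: J\text{ final segment of }X\}$; for non-principal $u$ exactly one of $I_u\in u$, $J_u\in u$ holds. Supports: $\mathrm{supp}(\tilde x)=\{x\}$; for non-principal $u$, $\mathrm{supp}(u)$ is $I_u$ regarded as a left half-cut if $I_u\in u$, and $J_u$ regarded as a right half-cut if $J_u\in u$; supports are equal iff of the same kind and equal as sets. "$\mathrm{supp}(u)=\mathrm{supp}(v)=I_u=I_v$" means $u,v$ non-principal, $I_u\in u$, $I_v\in v$, $I_u=I_v$; similarly for $J$. Order on supports: $\{x\}<\{y\}$ iff $x<y$; $\{x\}<I$ iff $x\in I$, $I<\{x\}$ iff $x\notin I$; $\{x\}<J$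 iff $x\notin J$, $J<\{x\}$ iff $x\in J$; $I<I'$ iff $I\subsetneq I'$; $J<J'$ iff $J\supsetneq J'$; $I<J$ iff $I\cap J=\emptyset$, $J<I$ iff $I\cap J\ne\emptyset$. *)

theory Defs
  imports Main
begin

text \<open>The linearly ordered set (X,<) is the universe of a type of class linorder.
  Ultrafilters over X are represented as sets of subsets of X.\<close>

definition ultrafilter :: "'a set set \<Rightarrow> bool" where
  "ultrafilter u \<longleftrightarrow> UNIV \<in> u \<and> {} \<notin> u
     \<and> (\<forall>S T. S \<in> u \<and> S \<subseteq> T \<longrightarrow> T \<in> u)
     \<and> (\<forall>S T. S \<in> u \<and> T \<in> u \<longrightarrow> S \<inter> T \<in> u)
     \<and> (\<forall>S. S \<in> u \<or> - S \<in> u)"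

definition principal :: "'a \<Rightarrow> 'a set set" where
  "principal x = {S. x \<in> S}"

definition nonprincipal :: "'a set set \<Rightarrow> bool" where
  "nonprincipal u \<longleftrightarrow> (\<forall>x. u \<noteq> principal x)"

definition ext2 :: "('a \<Rightarrow> 'a \<Rightarrow> 'a) \<Rightarrow> 'a set set \<Rightarrow> 'a set set \<Rightarrow> 'a set set" where
  "ext2 F u v = {S. {x. {y. F x y \<in> S} \<in> v} \<in> u}"

definition initial_seg :: "('a::linorder) set \<Rightarrow> bool" where
  "initial_seg I \<longleftrightarrow> (\<forall>x y. y \<in> I \<and> x \<le> y \<longrightarrow> x \<in> I)"

definition final_seg :: "('a::linorder) set \<Rightarrow> bool" where
  "final_seg J \<longleftrightarrow> (\<forall>x y. y \<in> J \<and> y \<le> x \<longrightarrow> x \<in> J)"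

definition Iu :: "('a::linorder) set set \<Rightarrow> 'a set" where
  "Iu u = \<Inter>{I \<in> u. initial_seg I}"

definition Ju :: "('a::linorder) set set \<Rightarrow> 'a set" where
  "Ju u = \<Inter>{J \<in> u. final_seg J}"

text \<open>Supports: a point, a left half-cut (an initial segment), or a right half-cut
  (a final segment).\<close>
datatype 'a support = Pt 'a | LCut "'a set" | RCut "'a set"

definition supp :: "('a::linorder) set set \<Rightarrow> 'a support" where
  "supp u = (if \<exists>x. u = principal x then Pt (THE x. u = principal x)
             else if Iu u \<in> u then LCut (Iu u) else RCut (Ju u))"

fun supp_less :: "('a::linorder) support \<Rightarrow> 'a support \<Rightarrow> bool" where
  "supp_less (Pt x) (Pt y) \<longleftrightarrow> x < y"
| "supp_less (Pt x) (LCut I) \<longleftrightarrow> x \<in> I"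
| "supp_less (LCut I) (Pt x) \<longleftrightarrow> x \<notin> I"
| "supp_less (Pt x) (RCut J) \<longleftrightarrow> x \<notin> J"
| "supp_less (RCut J) (Pt x) \<longleftrightarrow> x \<in> J"
| "supp_less (LCut I) (LCut I') \<longleftrightarrow> I \<subset> I'"
| "supp_less (RCut J) (RCut J') \<longleftrightarrow> J' \<subset> J"
| "supp_less (LCut I) (RCut J) \<longleftrightarrow> I \<inter> J = {}"
| "supp_less (RCut J) (LCut I) \<longleftrightarrow> I \<inter> J \<noteq> {}"

end

theory Submission
  imports Defs
begin

text \<open>Split \<open>X\<close> according to an ultrafilter \<open>v\<close>: the points \<open>x\<close> with \<open>{y. x < y} \<in> v\<close>,
  the points with \<open>{y. y < x} \<in> v\<close>, and at most one point \<open>a\<close> with \<open>v\<close> principal at \<open>a\<close>.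
  Exactly one piece belongs to \<open>u\<close>. If it is the first, then for \<open>u\<close>-almost all \<open>x\<close> and
  \<open>v\<close>-almost all \<open>y\<close> we have \<open>min x y = x\<close> and \<open>max x y = y\<close>, so the extended \<open>min\<close>
  returns \<open>u\<close> and the extended \<open>max\<close> returns \<open>v\<close>; the second piece is symmetric, and the
  third forces \<open>u = v\<close>. The first piece is an initial segment, namely \<open>{..<a}\<close>, \<open>I\<^sub>v\<close>
  or \<open>- J\<^sub>v\<close> according to the kind of \<open>supp v\<close>, and whether an initial segment lies in \<open>u\<close>
  is read off from \<open>supp u\<close>; comparing the two gives exactly the order on supports, except
  for equal left half-cuts, which are not comparable but still put the segment into \<open>u\<close>.\<close>

lemma ultrafilter_UNIV: "ultrafilter u \<Longrightarrow> UNIV \<in> u"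
  by (simp add: ultrafilter_def)

lemma ultrafilter_nonempty: "ultrafilter u \<Longrightarrow> S \<in> u \<Longrightarrow> S \<noteq> {}"
  unfolding ultrafilter_def by blast

lemma ultrafilter_mono: "ultrafilter u \<Longrightarrow> S \<in> u \<Longrightarrow> S \<subseteq> T \<Longrightarrow> T \<in> u"
  unfolding ultrafilter_def by blast

lemma ultrafilter_Int: "ultrafilter u \<Longrightarrow> S \<in> u \<Longrightarrow> T \<in> u \<Longrightarrow> S \<inter> T \<in> u"
  unfolding ultrafilter_def by blast

lemma ultrafilter_disjoint: "ultrafilter u \<Longrightarrow> S \<in> u \<Longrightarrow> T \<in> u \<Longrightarrow> S \<inter> T \<noteq> {}"
  by (metis ultrafilter_Int ultrafilter_nonempty)

lemma ultrafilter_Compl_iff: "ultrafilter u \<Longrightarrow> - S \<in> u \<longleftrightarrow> S \<notin> u"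
  unfolding ultrafilter_def by (metis Compl_disjoint)

lemma ultrafilter_Un: "ultrafilter u \<Longrightarrow> S \<union> T \<in> u \<Longrightarrow> S \<in> u \<or> T \<in> u"
  by (metis Compl_Un ultrafilter_Compl_iff ultrafilter_Int)

lemma ultrafilter_cong_on:
  "ultrafilter u \<Longrightarrow> W \<in> u \<Longrightarrow> S \<inter> W = T \<inter> W \<Longrightarrow> S \<in> u \<longleftrightarrow> T \<in> u"
  by (metis Int_lower1 ultrafilter_Int ultrafilter_mono)

lemma ultrafilter_const: "ultrafilter u \<Longrightarrow> (if P then UNIV else {}) \<in> u \<longleftrightarrow> P"
  by (auto simp: ultrafilter_UNIV dest: ultrafilter_nonempty)

lemma mem_principal [simp]: "S \<in> principal a \<longleftrightarrow> a \<in> S"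
  by (simp add: principal_def)

lemma ultrafilter_singleton_principal:
  assumes u: "ultrafilter u" and "{a} \<in> u"
  shows "u = principal a"
proof (rule set_eqI)
  fix S
  show "S \<in> u \<longleftrightarrow> S \<in> principal a"
    using ultrafilter_disjoint[OF u \<open>{a} \<in> u\<close>, of S] ultrafilter_mono[OF u \<open>{a} \<in> u\<close>, of S]
    by auto
qed

lemma principal_inject: "principal a = principal b \<longleftrightarrow> a = b"
  unfolding principal_def by blast

lemma nonprincipal_principal [simp]: "\<not> nonprincipal (principal a)"
  unfolding nonprincipal_def by blast

lemma supp_principal [simp]: "supp (principal a) = Pt a"
proof -
  have "(THE x. principal a = principal x) = a"
    by (rule the_equality) (simp_all add: principal_inject)
  then show ?thesis
    unfolding supp_def by auto
qed

lemma supp_nonprincipal: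
  "nonprincipal u \<Longrightarrow> supp u = (if Iu u \<in> u then LCut (Iu u) else RCut (Ju u))"
  by (simp add: supp_def nonprincipal_def)

lemma ext2_principal: "ext2 F (principal a) (principal b) = principal (F a b)"
  by (simp add: ext2_def principal_def)

lemma ext2_eq_left:
  assumes u: "ultrafilter u" and v: "ultrafilter v" and P: "P \<in> u"
    and fixes_left: "\<And>x. x \<in> P \<Longrightarrow> {y. F x y = x} \<in> v"
  shows "ext2 F u v = u"
proof (rule set_eqI)
  fix S
  have "{y. F x y \<in> S} \<in> v \<longleftrightarrow> x \<in> S" if "x \<in> P" for x
  proof -
    have "{y. F x y \<in> S} \<inter> {y. F x y = x} = (if x \<in> S then UNIV else {}) \<inter> {y. F x y = x}"
      by auto
    then have "{y. F x y \<in> S} \<in> v \<longleftrightarrow> (if x \<in> S then UNIV else {}) \<in> v"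
      by (rule ultrafilter_cong_on[OF v fixes_left[OF that]])
    then show ?thesis
      by (simp only: ultrafilter_const[OF v])
  qed
  then have "{x. {y. F x y \<in> S} \<in> v} \<inter> P = S \<inter> P"
    by blast
  then have "{x. {y. F x y \<in> S} \<in> v} \<in> u \<longleftrightarrow> S \<in> u"
    by (rule ultrafilter_cong_on[OF u P])
  then show "S \<in> ext2 F u v \<longleftrightarrow> S \<in> u"
    by (simp add: ext2_def)
qed

lemma ext2_eq_right:
  assumes u: "ultrafilter u" and v: "ultrafilter v" and P: "P \<in> u"
    and fixes_right: "\<And>x. x \<in> P \<Longrightarrow> {y. F x y = y} \<in> v"
  shows "ext2 F u v = v"
proof (rule set_eqI)
  fix S
  have "{y. F x y \<in> S} \<in> v \<longleftrightarrow> S \<in> v" if "x \<in> P" for x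
  proof -
    have "{y. F x y \<in> S} \<inter> {y. F x y = y} = S \<inter> {y. F x y = y}"
      by auto
    then show ?thesis
      using ultrafilter_cong_on[OF v fixes_right[OF that]] by blast
  qed
  then have "{x. {y. F x y \<in> S} \<in> v} \<inter> P = (if S \<in> v then UNIV else {}) \<inter> P"
    by (cases "S \<in> v") auto
  then have "{x. {y. F x y \<in> S} \<in> v} \<in> u \<longleftrightarrow> (if S \<in> v then UNIV else {}) \<in> u"
    by (rule ultrafilter_cong_on[OF u P])
  then show "S \<in> ext2 F u v \<longleftrightarrow> S \<in> v"
    by (simp add: ext2_def ultrafilter_const[OF u])
qed

definition points_below :: "('a::linorder) set set \<Rightarrow> 'a set" where
  "points_below v = {x. {y. x < y} \<in> v}"

definition points_above :: "('a::linorder) set set \<Rightarrow> 'a set" where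
  "points_above v = {x. {y. y < x} \<in> v}"

lemma points_below_principal [simp]: "points_below (principal b) = {..<b}"
  by (auto simp: points_below_def)

lemma points_above_principal [simp]: "points_above (principal b) = {b<..}"
  by (auto simp: points_above_def)

lemma initial_seg_points_below: "ultrafilter v \<Longrightarrow> initial_seg (points_below v)"
  unfolding initial_seg_def points_below_def
  by (auto elim!: ultrafilter_mono)

lemma final_seg_points_above: "ultrafilter v \<Longrightarrow> final_seg (points_above v)"
  unfolding final_seg_def points_above_def
  by (auto elim!: ultrafilter_mono)

lemma points_below_above_disjoint:
  "ultrafilter v \<Longrightarrow> points_below v \<inter> points_above v = {}"
  unfolding points_below_def points_above_def
  by (auto dest: ultrafilter_disjoint)

lemma points_below_above_cases:
  assumes v: "ultrafilter v"
  shows "x \<in> points_below v \<or> x \<in> points_above v \<or> {x} \<in> v"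
proof -
  have "UNIV = {y. x < y} \<union> {y. y < x} \<union> {x}"
    by auto
  then show ?thesis
    unfolding points_below_def points_above_def
    using ultrafilter_UNIV[OF v] ultrafilter_Un[OF v] by (metis mem_Collect_eq)
qed

lemma points_above_nonprincipal:
  assumes "ultrafilter v" and "nonprincipal v"
  shows "points_above v = - points_below v"
  using points_below_above_disjoint[OF assms(1)] points_below_above_cases[OF assms(1)]
    ultrafilter_singleton_principal[OF assms(1)] assms(2)
  unfolding nonprincipal_def by blast

lemma Iu_eq_points_below:
  assumes u: "ultrafilter u" and np: "nonprincipal u"
  shows "Iu u = points_below u"
proof (intro equalityI subsetI)
  fix z assume z: "z \<in> Iu u"
  have "initial_seg {y. y < z}"
    by (auto simp: initial_seg_def)
  then have "z \<notin> points_above u"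
    using z by (auto simp: Iu_def points_above_def)
  moreover have "{z} \<notin> u"
    using np ultrafilter_singleton_principal[OF u] by (auto simp: nonprincipal_def)
  ultimately show "z \<in> points_below u"
    using points_below_above_cases[OF u] by blast
next
  fix z assume "z \<in> points_below u"
  then have "{y. z < y} \<in> u"
    by (simp add: points_below_def)
  then show "z \<in> Iu u"
    unfolding Iu_def initial_seg_def
    by (force dest: ultrafilter_disjoint[OF u] intro: less_imp_le)
qed

lemma Ju_eq_points_above:
  assumes u: "ultrafilter u" and np: "nonprincipal u"
  shows "Ju u = points_above u"
proof (intro equalityI subsetI)
  fix z assume z: "z \<in> Ju u"
  have "final_seg {y. z < y}"
    by (auto simp: final_seg_def)
  then have "z \<notin> points_below u"
    using z by (auto simp: Ju_def points_below_def)
  moreover have "{z} \<notin> u"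
    using np ultrafilter_singleton_principal[OF u] by (auto simp: nonprincipal_def)
  ultimately show "z \<in> points_above u"
    using points_below_above_cases[OF u] by blast
next
  fix z assume "z \<in> points_above u"
  then have "{y. y < z} \<in> u"
    by (simp add: points_above_def)
  then show "z \<in> Ju u"
    unfolding Ju_def final_seg_def
    by (force dest: ultrafilter_disjoint[OF u] intro: less_imp_le)
qed

lemma ultrafilter_cases [consumes 1, case_names principal left right]:
  assumes u: "ultrafilter u"
  obtains (principal) a where "u = principal a"
  | (left) "nonprincipal u" "Iu u = points_below u" "Ju u = points_above u"
      "points_below u \<in> u" "points_above u \<notin> u" "supp u = LCut (points_below u)"
  | (right) "nonprincipal u" "Iu u = points_below u" "Ju u = points_above u"
      "points_above u \<in> u" "points_below u \<notin> u" "supp u = RCut (points_above u)"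
proof (cases "nonprincipal u")
  case True
  note Iu = Iu_eq_points_below[OF u True] and Ju = Ju_eq_points_above[OF u True]
  have "points_above u = - points_below u"
    by (rule points_above_nonprincipal[OF u True])
  then show ?thesis
    using that(2,3)[OF True Iu Ju] supp_nonprincipal[OF True] ultrafilter_Compl_iff[OF u]
    unfolding Iu Ju by metis
qed (use that(1) in \<open>auto simp: nonprincipal_def\<close>)

lemma initial_seg_mem_iff_Iu:
  assumes "ultrafilter u" "Iu u \<in> u" "initial_seg A"
  shows "A \<in> u \<longleftrightarrow> Iu u \<subseteq> A"
  using assms ultrafilter_mono unfolding Iu_def by blast

lemma final_seg_mem_iff_Ju:
  assumes "ultrafilter u" "Ju u \<in> u" "final_seg A"
  shows "A \<in> u \<longleftrightarrow> Ju u \<subseteq> A"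
  using assms ultrafilter_mono unfolding Ju_def by blast

lemma final_seg_mem_iff_Iu:
  assumes u: "ultrafilter u" and "Iu u \<in> u" "final_seg A"
  shows "A \<in> u \<longleftrightarrow> A \<inter> Iu u \<noteq> {}"
proof -
  have "initial_seg (- A)"
    using \<open>final_seg A\<close> unfolding initial_seg_def final_seg_def by blast
  then show ?thesis
    using initial_seg_mem_iff_Iu[OF u \<open>Iu u \<in> u\<close>] ultrafilter_Compl_iff[OF u] by blast
qed

lemma initial_seg_mem_iff_Ju:
  assumes u: "ultrafilter u" and "Ju u \<in> u" "initial_seg A"
  shows "A \<in> u \<longleftrightarrow> A \<inter> Ju u \<noteq> {}"
proof -
  have "final_seg (- A)"
    using \<open>initial_seg A\<close> unfolding initial_seg_def final_seg_def by blast
  then show ?thesis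
    using final_seg_mem_iff_Ju[OF u \<open>Ju u \<in> u\<close>] ultrafilter_Compl_iff[OF u] by blast
qed

lemma points_below_no_greatest:
  assumes u: "ultrafilter u" and "points_below u \<in> u" "z \<in> points_below u"
  shows "\<exists>y \<in> points_below u. z < y"
  using assms ultrafilter_disjoint[OF u] unfolding points_below_def by blast

lemma points_above_no_least:
  assumes u: "ultrafilter u" and "points_above u \<in> u" "z \<in> points_above u"
  shows "\<exists>y \<in> points_above u. y < z"
  using assms ultrafilter_disjoint[OF u] unfolding points_above_def by blast

lemma initial_seg_subset_lessThan: "initial_seg I \<Longrightarrow> I \<subseteq> {..<b} \<longleftrightarrow> b \<notin> I"
  unfolding initial_seg_def by (auto, meson not_less)

lemma final_seg_subset_greaterThan: "final_seg J \<Longrightarrow> J \<subseteq> {b<..} \<longleftrightarrow> b \<notin> J"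
  unfolding final_seg_def by (auto, meson not_less)

lemma final_seg_Int_lessThan:
  "final_seg J \<Longrightarrow> \<forall>z\<in>J. \<exists>y\<in>J. y < z \<Longrightarrow> {..<b} \<inter> J \<noteq> {} \<longleftrightarrow> b \<in> J"
  unfolding final_seg_def by (auto dest: less_imp_le)

lemma initial_seg_Int_greaterThan:
  "initial_seg I \<Longrightarrow> \<forall>z\<in>I. \<exists>y\<in>I. z < y \<Longrightarrow> {b<..} \<inter> I \<noteq> {} \<longleftrightarrow> b \<in> I"
  unfolding initial_seg_def by (auto dest: less_imp_le)

lemma initial_seg_Int_Compl:
  "initial_seg I \<Longrightarrow> initial_seg I' \<Longrightarrow> I \<inter> - I' \<noteq> {} \<longleftrightarrow> I' \<subset> I"
  unfolding initial_seg_def by (auto, meson linear)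

lemma final_seg_Int_Compl:
  "final_seg J \<Longrightarrow> final_seg J' \<Longrightarrow> J \<inter> - J' \<noteq> {} \<longleftrightarrow> J' \<subset> J"
  unfolding final_seg_def by (auto, meson linear)

lemma points_below_mem_iff_supp_less:
  fixes u v :: "('a::linorder) set set"
  assumes u: "ultrafilter u" and v: "ultrafilter v"
  shows "points_below v \<in> u \<longleftrightarrow> supp_less (supp u) (supp v)
           \<or> (nonprincipal u \<and> nonprincipal v \<and> Iu u \<in> u \<and> Iu v \<in> v \<and> Iu u = Iu v)"
  using u
proof (cases rule: ultrafilter_cases)
  case (principal a)
  from v show ?thesis
    by (cases rule: ultrafilter_cases)
      (simp_all add: principal points_above_nonprincipal[OF v])
next
  case left
  have mem: "points_below v \<in> u \<longleftrightarrow> points_below u \<subseteq> points_below v"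
    using initial_seg_mem_iff_Iu[OF u _ initial_seg_points_below[OF v]] left by simp
  from v show ?thesis
  proof (cases rule: ultrafilter_cases)
    case (principal b)
    then show ?thesis
      using mem left initial_seg_subset_lessThan[OF initial_seg_points_below[OF u]] by simp
  next
    case left': left
    then show ?thesis
      using mem left by (simp add: subset_iff_psubset_eq)
  next
    case right': right
    then show ?thesis
      using mem left points_above_nonprincipal[OF v] by (simp add: disjoint_eq_subset_Compl)
  qed
next
  case right
  have mem: "points_below v \<in> u \<longleftrightarrow> points_below v \<inter> points_above u \<noteq> {}"
    using initial_seg_mem_iff_Ju[OF u _ initial_seg_points_below[OF v]] right by simp
  from v show ?thesis
  proof (cases rule: ultrafilter_cases)
    case (principal b)
    then show ?thesis
      using mem right final_seg_Int_lessThan[OF final_seg_points_above[OF u]]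
        points_above_no_least[OF u] by simp
  next
    case left': left
    then show ?thesis
      using mem right by (simp add: Int_commute)
  next
    case right': right
    then show ?thesis
      using mem right points_above_nonprincipal[OF v]
        final_seg_Int_Compl[OF final_seg_points_above[OF u] final_seg_points_above[OF v]]
      by (simp add: Int_commute)
  qed
qed

lemma points_above_mem_iff_supp_less:
  fixes u v :: "('a::linorder) set set"
  assumes u: "ultrafilter u" and v: "ultrafilter v"
  shows "points_above v \<in> u \<longleftrightarrow> supp_less (supp v) (supp u)
           \<or> (nonprincipal u \<and> nonprincipal v \<and> Ju u \<in> u \<and> Ju v \<in> v \<and> Ju u = Ju v)"
  using u
proof (cases rule: ultrafilter_cases)
  case (principal a)
  from v show ?thesis
    by (cases rule: ultrafilter_cases)
      (simp_all add: principal points_above_nonprincipal[OF v])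
next
  case left
  have mem: "points_above v \<in> u \<longleftrightarrow> points_above v \<inter> points_below u \<noteq> {}"
    using final_seg_mem_iff_Iu[OF u _ final_seg_points_above[OF v]] left by simp
  from v show ?thesis
  proof (cases rule: ultrafilter_cases)
    case (principal b)
    then show ?thesis
      using mem left initial_seg_Int_greaterThan[OF initial_seg_points_below[OF u]]
        points_below_no_greatest[OF u] by simp
  next
    case left': left
    then show ?thesis
      using mem left points_above_nonprincipal[OF v]
        initial_seg_Int_Compl[OF initial_seg_points_below[OF u] initial_seg_points_below[OF v]]
      by (simp add: Int_commute)
  next
    case right': right
    then show ?thesis
      using mem left by (simp add: Int_commute)
  qed
next
  case right
  have mem: "points_above v \<in> u \<longleftrightarrow> points_above u \<subseteq> points_above v"
    using final_seg_mem_iff_Ju[OF u _ final_seg_points_above[OF v]] right by simp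
  from v show ?thesis
  proof (cases rule: ultrafilter_cases)
    case (principal b)
    then show ?thesis
      using mem right final_seg_subset_greaterThan[OF final_seg_points_above[OF u]] by simp
  next
    case left': left
    then show ?thesis
      using mem right points_above_nonprincipal[OF v] by (auto simp: disjoint_eq_subset_Compl)
  next
    case right': right
    then show ?thesis
      using mem right by (simp add: subset_iff_psubset_eq)
  qed
qed

lemma ext2_min_max_points_below:
  assumes u: "ultrafilter u" and v: "ultrafilter v" and below: "points_below v \<in> u"
  shows "ext2 min u v = u" and "ext2 max u v = v"
proof -
  have above_x: "{y. x < y} \<in> v" if "x \<in> points_below v" for x
    using that by (simp add: points_below_def)
  show "ext2 min u v = u"
    by (rule ext2_eq_left[OF u v below], rule ultrafilter_mono[OF v above_x]) auto
  show "ext2 max u v = v"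
    by (rule ext2_eq_right[OF u v below], rule ultrafilter_mono[OF v above_x]) auto
qed

lemma ext2_min_max_points_above:
  assumes u: "ultrafilter u" and v: "ultrafilter v" and above: "points_above v \<in> u"
  shows "ext2 min u v = v" and "ext2 max u v = u"
proof -
  have below_x: "{y. y < x} \<in> v" if "x \<in> points_above v" for x
    using that by (simp add: points_above_def)
  show "ext2 min u v = v"
    by (rule ext2_eq_right[OF u v above], rule ultrafilter_mono[OF v below_x]) auto
  show "ext2 max u v = u"
    by (rule ext2_eq_left[OF u v above], rule ultrafilter_mono[OF v below_x]) auto
qed

lemma ultrafilter_trichotomy:
  assumes u: "ultrafilter u" and v: "ultrafilter v"
  shows "points_below v \<in> u \<or> points_above v \<in> u \<or> (\<exists>a. u = principal a \<and> v = principal a)"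
proof -
  define E where "E = {x. {x} \<in> v}"
  have "points_below v \<union> points_above v \<union> E = UNIV"
    using points_below_above_cases[OF v] by (auto simp: E_def)
  then have "points_below v \<in> u \<or> points_above v \<in> u \<or> E \<in> u"
    using ultrafilter_UNIV[OF u] ultrafilter_Un[OF u] by metis
  moreover have "u = principal a \<and> v = principal a" if "E \<in> u" "a \<in> E" for a
  proof
    show v_a: "v = principal a"
      using \<open>a \<in> E\<close> ultrafilter_singleton_principal[OF v] by (simp add: E_def)
    then have "E \<subseteq> {a}"
      by (auto simp: E_def)
    then show "u = principal a"
      using \<open>E \<in> u\<close> ultrafilter_mono[OF u] ultrafilter_singleton_principal[OF u] by blast
  qed
  ultimately show ?thesis
    using ultrafilter_nonempty[OF u] by blast
qed

theorem corollary4: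
  fixes u v :: "('a::linorder) set set"
  assumes "ultrafilter u" and "ultrafilter v"
  shows "(ext2 min u v = u \<longleftrightarrow> ext2 max u v = v)
       \<and> (ext2 max u v = v \<longleftrightarrow>
            (supp_less (supp u) (supp v)
             \<or> (nonprincipal u \<and> nonprincipal v \<and> Iu u \<in> u \<and> Iu v \<in> v \<and> Iu u = Iu v)
             \<or> u = v))
       \<and> (ext2 min u v = v \<longleftrightarrow> ext2 max u v = u)
       \<and> (ext2 max u v = u \<longleftrightarrow>
            (supp_less (supp v) (supp u)
             \<or> (nonprincipal u \<and> nonprincipal v \<and> Ju u \<in> u \<and> Ju v \<in> v \<and> Ju u = Ju v)
             \<or> u = v))"
proof -
  note below_iff = points_below_mem_iff_supp_less[OF assms]
    and above_iff = points_above_mem_iff_supp_less[OF assms]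
  have not_both: "\<not> (points_below v \<in> u \<and> points_above v \<in> u)"
    using ultrafilter_disjoint[OF assms(1)] points_below_above_disjoint[OF assms(2)] by blast
  from ultrafilter_trichotomy[OF assms] consider
      (below) "points_below v \<in> u" | (above) "points_above v \<in> u"
    | (equal) a where "u = principal a" "v = principal a"
    by blast
  then show ?thesis
  proof cases
    case below
    then show ?thesis
      using ext2_min_max_points_below[OF assms below] below_iff above_iff not_both by auto
  next
    case above
    then show ?thesis
      using ext2_min_max_points_above[OF assms above] below_iff above_iff not_both by auto
  next
    case equal
    then show ?thesis
      by (simp add: ext2_principal)
  qed
qed

end
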